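(* Let $n\ge2$, $s\in(0,1)$, $0<\lambda\le\Lambda<\infty$, and let $L$ be an operator of the form $Lu(x)=\mathrm{P.V.}\int_{\mathbb{R}^n}(u(x)-u(x+y))K(y)\,dy$ with $K(y)=K(-y)$ and $\lambda|y|^{-n-2s}\le K(y)\le\Lambda|y|^{-n-2s}$ for all $y$. Let $R>0$, $0<\kappa<R$, and let $\Omega\subset\mathbb{R}^n$ be an open set satisfying property $(\mathcal{P}_{R,\kappa})$: for all $0<r<R$ and all $z\in\partial\Omega$ there exists $x_{r,z}\in\Omega^c$ with $B_{\kappa r}(x_{r,z})\subset\Omega^c\cap B_r(z)$. Then there exist $d_0=d_0(s,R,\Omega)>0$ and $c_0=c_0(n,s,\lambda,\kappa)>0$ such that \[ L\chi_\Omega(x)\ge c_0\, d_\Omega(x)^{-2s}\qquad\text{for all }x\in\Omega\text{ with } d_\Omega(x)<d_0. \]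
   Context: $\chi_\Omega$ is the indicator function of $\Omega$ and $d_\Omega(x)=\mathrm{dist}(x,\Omega^c)$. *)

theory Defs
  imports "HOL-Analysis.Analysis"
begin

definition dOmega :: "('a::metric_space) set \<Rightarrow> 'a \<Rightarrow> real" where
  "dOmega \<Omega> x = infdist x (- \<Omega>)"

definition pv_op :: "(real^'n \<Rightarrow> real) \<Rightarrow> (real^'n \<Rightarrow> real) \<Rightarrow> real^'n \<Rightarrow> real" where
  "pv_op K u x = Lim (at_right 0)
     (\<lambda>\<epsilon>. LINT y : {y. norm y \<ge> \<epsilon>} | lborel. (u x - u (x + y)) * K y)"

definition prop_P :: "real \<Rightarrow> real \<Rightarrow> (real^'n) set \<Rightarrow> bool" where
  "prop_P R \<kappa> \<Omega> \<longleftrightarrow> (\<forall>r z. 0 < r \<and> r < R \<and> z \<in> frontier \<Omega> \<longrightarrow>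
      (\<exists>xr. xr \<in> - \<Omega> \<and> ball xr (\<kappa> * r) \<subseteq> - \<Omega> \<inter> ball z r))"

end

theory Submission
  imports Defs
begin

(*
  For x in Omega at distance d = d_Omega(x) from the complement, the integrand of
  L chi_Omega(x) vanishes for |y| < d, so the principal value is the absolutely convergent
  integral of K over {y. x + y \<notin> Omega}; convergence at infinity comes from K <= Lam |y|^(-n-2s)
  with n + 2s > n.  Property (P_{R,kappa}) at a nearest boundary point z, with r = 2d < R,
  gives a ball of radius 2 kappa d inside Omega^c and within distance 3d of x.  There
  K >= lam (3d)^(-n-2s), and integrating over that ball yields the bound with
  c0 = lam 3^(-n-2s) |B_1| (2 kappa)^n and d0 = R/2.
*)

lemma ex_dyadic_interval:
  fixes x :: real
  assumes "1 \<le> x"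
  obtains k :: nat where "2 ^ k \<le> x" "x < 2 ^ (k + 1)"
proof
  define k where "k = nat \<lfloor>log 2 x\<rfloor>"
  have "\<lfloor>log 2 x\<rfloor> = int k" using assms unfolding k_def by simp
  then have "2 powr real k \<le> x \<and> x < 2 powr (real k + 1)"
    using assms floor_log_eq_powr_iff[of x 2 "int k"] by simp
  then show "2 ^ k \<le> x" "x < 2 ^ (k + 1)"
    by (simp_all add: powr_realpow[symmetric] powr_add)
qed

lemma powr_dyadic_shell:
  fixes d a N :: real and k :: nat
  assumes "d > 0"
  shows "(2 ^ k * d) powr (- a) * (2 ^ (k + 1) * d) powr N
       = 2 powr N * d powr (N - a) * (2 powr (N - a)) ^ k"
proof -
  have "(2 ^ k * d) powr (- a) = 2 powr (- a * k) * d powr (- a)"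
    "(2 ^ (k + 1) * d) powr N = 2 powr N * 2 powr (N * k) * d powr N"
    using assms by (simp_all add: powr_mult powr_realpow[symmetric] powr_powr powr_add[symmetric]
        algebra_simps del: power_Suc)
  moreover have "(2 powr (N - a)) ^ k = 2 powr (N * k) * 2 powr (- a * k)"
    "d powr (N - a) = d powr N * d powr (- a)"
    by (simp_all add: powr_realpow[symmetric] powr_powr powr_add[symmetric] algebra_simps)
  ultimately show ?thesis by (simp add: ac_simps)
qed

lemma norm_powr_outside_ball_le_dyadic_sum:
  fixes y :: "'a::real_normed_vector" and d a :: real
  assumes d: "d > 0" and a: "a \<ge> 0"
  shows "ennreal (indicator {y. d \<le> norm y} y * norm y powr (- a))
    \<le> (\<Sum>k. ennreal ((2 ^ k * d) powr (- a)) * indicator (ball 0 (2 ^ (k + 1) * d)) y)"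
    (is "_ \<le> (\<Sum>k. ?g k)")
proof (cases "d \<le> norm y")
  case True
  then obtain k :: nat where k: "2 ^ k \<le> norm y / d" "norm y / d < 2 ^ (k + 1)"
    using ex_dyadic_interval[of "norm y / d"] d by auto
  have "norm y powr (- a) \<le> (2 ^ k * d) powr (- a)"
    using k d a by (intro powr_mono2') (auto simp: field_simps)
  then have "ennreal (indicator {y. d \<le> norm y} y * norm y powr (- a)) \<le> ?g k"
    using True k d by (simp add: field_simps ennreal_leI)
  also have "\<dots> \<le> (\<Sum>k. ?g k)"
    using ennreal_suminf_lessD[of ?g "?g k" k] not_le by blast
  finally show ?thesis .
qed simp

lemma integrable_norm_powr_outside_ball:
  fixes d a :: real
  assumes d: "d > 0" and a: "a > DIM('a)"
  shows "integrable lborel (\<lambda>y::'a::euclidean_space. indicator {y. d \<le> norm y} y * norm y powr (- a))"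
proof -
  \<comment> \<open>The dominating dyadic step function has integral a geometric series of ratio 2^(N - a) < 1.\<close>
  define N where "N = real DIM('a)"
  define c where "c k = (2 ^ k * d) powr (- a)" for k :: nat
  define B where "B k = ball (0::'a) (2 ^ (k + 1) * d)" for k :: nat
  define q where "q k = unit_ball_vol N * 2 powr N * d powr (N - a) * (2 powr (N - a)) ^ k" for k
  have q_nonneg: "0 \<le> q k" for k unfolding q_def N_def by simp
  have q_summable: "summable q"
  proof -
    have "2 powr (N - a) < 1" using a unfolding N_def by (intro powr_less_one) auto
    then show ?thesis unfolding q_def by (intro summable_mult summable_geometric) auto
  qed
  have shell_integral: "(\<integral>\<^sup>+y. ennreal (c k) * indicator (B k) y \<partial>lborel) = ennreal (q k)" for k
  proof -
    have "(\<integral>\<^sup>+y. ennreal (c k) * indicator (B k) y \<partial>lborel)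
        = ennreal (c k) * ennreal (unit_ball_vol N * (2 ^ (k + 1) * d) powr N)"
      unfolding B_def N_def using d by (simp add: nn_integral_cmult_indicator emeasure_ball powr_realpow)
    also have "\<dots> = ennreal (q k)"
      unfolding q_def c_def N_def using powr_dyadic_shell[OF d, of k a N]
      by (simp add: ennreal_mult'[symmetric] N_def mult_ac)
    finally show ?thesis .
  qed
  have "(\<integral>\<^sup>+(y::'a). ennreal (norm (indicator {y. d \<le> norm y} y * norm y powr (- a))) \<partial>lborel)
      \<le> (\<integral>\<^sup>+y. (\<Sum>k. ennreal (c k) * indicator (B k) y) \<partial>lborel)"
  proof (rule nn_integral_mono)
    fix y :: 'a
    have "0 \<le> a" using a of_nat_0_le_iff[of "DIM('a)"] by linarith
    then show "ennreal (norm (indicator {y. d \<le> norm y} y * norm y powr (- a)))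
        \<le> (\<Sum>k. ennreal (c k) * indicator (B k) y)"
      using norm_powr_outside_ball_le_dyadic_sum[OF d, of a y] unfolding c_def B_def by simp
  qed
  also have "\<dots> = (\<Sum>k. \<integral>\<^sup>+y. ennreal (c k) * indicator (B k) y \<partial>lborel)"
    by (intro nn_integral_suminf borel_measurable_times_ennreal borel_measurable_indicator)
      (auto simp: B_def)
  also have "\<dots> = ennreal (\<Sum>k. q k)"
    unfolding shell_integral by (rule suminf_ennreal2[OF q_nonneg q_summable])
  also have "\<dots> < \<infinity>" by simp
  finally show ?thesis by (intro integrableI_bounded) auto
qed

lemma integrable_vanishing_near_zero:
  fixes g :: "'a::euclidean_space \<Rightarrow> real" and a :: real
  assumes meas: "g \<in> borel_measurable lborel" and d: "d > 0" and a: "a > DIM('a)"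
    and zero: "\<And>y. norm y < d \<Longrightarrow> g y = 0"
    and bound: "\<And>y. \<bar>g y\<bar> \<le> C * norm y powr (- a)"
  shows "integrable lborel g"
proof (rule Bochner_Integration.integrable_bound[OF _ meas])
  show "integrable lborel (\<lambda>y::'a. C * (indicator {y. d \<le> norm y} y * norm y powr (- a)))"
    by (intro integrable_mult_right integrable_norm_powr_outside_ball d a)
  show "AE y in lborel. norm (g y) \<le> norm (C * (indicator {y. d \<le> norm y} y * norm y powr (- a)))"
  proof (intro AE_I2)
    fix y :: 'a
    have "0 \<le> C * norm y powr (- a)" using bound[of y] by linarith
    then show "norm (g y) \<le> norm (C * (indicator {y. d \<le> norm y} y * norm y powr (- a)))"
      using zero[of y] bound[of y] by (cases "d \<le> norm y") auto
  qed
qed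

lemma pv_op_eq_integral:
  assumes "d > 0" and "\<And>y. norm y < d \<Longrightarrow> (u x - u (x + y)) * K y = 0"
  shows "pv_op K u x = (LINT y|lborel. (u x - u (x + y)) * K y)"
proof -
  have "(LINT y : {y. norm y \<ge> \<epsilon>} | lborel. (u x - u (x + y)) * K y)
      = (LINT y|lborel. (u x - u (x + y)) * K y)" if "\<epsilon> \<le> d" for \<epsilon>
    unfolding set_lebesgue_integral_def
  proof (intro Bochner_Integration.integral_cong refl)
    fix y :: "real^'a"
    show "indicator {y. \<epsilon> \<le> norm y} y *\<^sub>R ((u x - u (x + y)) * K y) = (u x - u (x + y)) * K y"
      using assms(2)[of y] that by (cases "\<epsilon> \<le> norm y") auto
  qed
  then have "eventually (\<lambda>\<epsilon>. (LINT y : {y. norm y \<ge> \<epsilon>} | lborel. (u x - u (x + y)) * K y)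
      = (LINT y|lborel. (u x - u (x + y)) * K y)) (at_right 0)"
    unfolding eventually_at_right_field using assms(1) by (intro exI[of _ d]) auto
  then show ?thesis
    unfolding pv_op_def by (intro tendsto_Lim tendsto_eventually) auto
qed

lemma pv_op_indicator_open:
  fixes \<Omega> :: "(real^'n) set"
  assumes "open \<Omega>" and "x \<in> \<Omega>"
  shows "pv_op K (indicator \<Omega>) x = (LINT y|lborel. indicator (- \<Omega>) (x + y) * K y)"
proof -
  obtain e where e: "e > 0" "ball x e \<subseteq> \<Omega>" using assms by (meson openE)
  have "x + y \<in> \<Omega>" if "norm y < e" for y
    using e(2) that by (auto simp: dist_norm)
  then have "pv_op K (indicator \<Omega>) x = (LINT y|lborel. (indicator \<Omega> x - indicator \<Omega> (x + y)) * K y)"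
    using e(1) assms(2) by (intro pv_op_eq_integral) auto
  also have "\<dots> = (LINT y|lborel. indicator (- \<Omega>) (x + y) * K y)"
    using assms(2) by (intro Bochner_Integration.integral_cong) (auto simp: indicator_def)
  finally show ?thesis .
qed

lemma ball_dOmega_subset: "ball x (dOmega \<Omega> x) \<subseteq> \<Omega>"
proof
  fix y assume y: "y \<in> ball x (dOmega \<Omega> x)"
  show "y \<in> \<Omega>"
  proof (rule ccontr)
    assume "y \<notin> \<Omega>"
    then have "dOmega \<Omega> x \<le> dist x y" unfolding dOmega_def by (intro infdist_le) auto
    with y show False by simp
  qed
qed

lemma dOmega_pos:
  assumes "open \<Omega>" "\<Omega> \<noteq> UNIV" "x \<in> \<Omega>"
  shows "dOmega \<Omega> x > 0"
  unfolding dOmega_def using assms by (intro infdist_pos_not_in_closed) auto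

lemma dOmega_attained_on_frontier:
  fixes \<Omega> :: "'a::euclidean_space set"
  assumes "open \<Omega>" "\<Omega> \<noteq> UNIV" "x \<in> \<Omega>"
  obtains z where "z \<in> frontier \<Omega>" "dist x z = dOmega \<Omega> x"
proof -
  obtain z where z: "z \<in> - \<Omega>" "dOmega \<Omega> x = dist x z"
    using infdist_attains_inf[of "- \<Omega>" x] assms unfolding dOmega_def by auto
  have "z \<in> cball x (dOmega \<Omega> x)" using z by simp
  also have "\<dots> = closure (ball x (dOmega \<Omega> x))" using dOmega_pos[OF assms] by simp
  also have "\<dots> \<subseteq> closure \<Omega>" by (intro closure_mono ball_dOmega_subset)
  finally have "z \<in> frontier \<Omega>" using z(1) assms(1) by (simp add: frontier_def interior_open)
  with z(2) show ?thesis using that by simp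
qed

lemma prop_P_exterior_ball_nearby:
  fixes \<Omega> :: "(real^'n) set"
  assumes P: "prop_P R \<kappa> \<Omega>" and "open \<Omega>" "\<Omega> \<noteq> UNIV" "x \<in> \<Omega>" and dR: "2 * dOmega \<Omega> x < R"
  obtains c where "ball c (\<kappa> * (2 * dOmega \<Omega> x)) \<subseteq> - \<Omega> \<inter> ball x (3 * dOmega \<Omega> x)"
proof -
  define d where "d = dOmega \<Omega> x"
  obtain z where z: "z \<in> frontier \<Omega>" "dist x z = d"
    using dOmega_attained_on_frontier[OF assms(2-4)] unfolding d_def by blast
  have "0 < 2 * d" using dOmega_pos[OF assms(2-4)] unfolding d_def by simp
  then obtain c where c: "ball c (\<kappa> * (2 * d)) \<subseteq> - \<Omega> \<inter> ball z (2 * d)"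
    using P z(1) dR unfolding prop_P_def d_def by blast
  have "ball z (2 * d) \<subseteq> ball x (3 * d)"
  proof
    fix y assume "y \<in> ball z (2 * d)"
    then show "y \<in> ball x (3 * d)" using z(2) dist_triangle[of x y z] by (simp add: dist_commute)
  qed
  with c show ?thesis using that unfolding d_def by blast
qed

lemma pv_op_indicator_nonneg:
  fixes \<Omega> :: "(real^'n) set"
  assumes "open \<Omega>" "x \<in> \<Omega>" and "\<And>y. 0 \<le> K y"
  shows "0 \<le> pv_op K (indicator \<Omega>) x"
  unfolding pv_op_indicator_open[OF assms(1,2)] using assms(3) by simp

lemma pv_op_indicator_ge_exterior_ball:
  fixes K :: "real^'n \<Rightarrow> real" and \<Omega> :: "(real^'n) set" and a :: real
  assumes a: "a > CARD('n)" and lam: "0 \<le> lam"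
    and K_meas: "K \<in> borel_measurable lborel"
    and K_lower: "\<And>y. lam * norm y powr (- a) \<le> K y"
    and K_upper: "\<And>y. K y \<le> Lam * norm y powr (- a)"
    and \<Omega>: "open \<Omega>" and x: "x \<in> \<Omega>" and c: "ball c r \<subseteq> - \<Omega> \<inter> ball x \<rho>"
  shows "lam * \<rho> powr (- a) * measure lborel (ball c r) \<le> pv_op K (indicator \<Omega>) x"
proof -
  define h where "h y = indicator (- \<Omega>) (x + y) * K y" for y
  have K_nonneg: "0 \<le> K y" for y
    using K_lower[of y] lam by (meson order_trans mult_nonneg_nonneg powr_ge_zero)
  obtain e where e: "e > 0" "ball x e \<subseteq> \<Omega>" using \<Omega> x by (meson openE)
  have h_int: "integrable lborel h"
  proof (rule integrable_vanishing_near_zero[of h e a Lam])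
    have "- \<Omega> \<in> sets borel" using \<Omega> by (simp add: borel_closed closed_Compl)
    then show "h \<in> borel_measurable lborel" unfolding h_def using K_meas by measurable
    show "h y = 0" if "norm y < e" for y
    proof -
      have "x + y \<in> ball x e" using that by (simp add: dist_norm)
      then show ?thesis using e(2) unfolding h_def by auto
    qed
    show "\<bar>h y\<bar> \<le> Lam * norm y powr (- a)" for y
      using K_nonneg[of y] K_upper[of y] unfolding h_def by (auto simp: indicator_def)
  qed (use e a in auto)
  have below: "lam * \<rho> powr (- a) * indicator (ball (c - x) r) y \<le> h y" for y
  proof (cases "y \<in> ball (c - x) r")
    case True
    then have "x + y \<in> ball c r" by (simp add: dist_norm algebra_simps)
    then have xy: "x + y \<notin> \<Omega>" "dist x (x + y) < \<rho>" using c by auto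
    then have "0 < norm y" "norm y < \<rho>" using x by (auto simp: dist_norm)
    then have "lam * \<rho> powr (- a) \<le> lam * norm y powr (- a)"
      using lam a by (intro mult_left_mono powr_mono2') auto
    with K_lower[of y] True xy(1) show ?thesis unfolding h_def by simp
  qed (simp add: h_def K_nonneg)
  have "lam * \<rho> powr (- a) * measure lborel (ball c r)
      = (LINT y|lborel. lam * \<rho> powr (- a) * indicator (ball (c - x) r) y)"
    by (cases "0 \<le> r") (simp_all add: content_ball ball_empty)
  also have "\<dots> \<le> integral\<^sup>L lborel h"
    using below h_int
    by (intro integral_mono) (auto intro!: integrable_real_indicator emeasure_lborel_ball_finite)
  also have "\<dots> = pv_op K (indicator \<Omega>) x"
    unfolding pv_op_indicator_open[OF \<Omega> x] h_def ..
  finally show ?thesis .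
qed

lemma pv_op_indicator_lower_bound:
  fixes K :: "real^'n \<Rightarrow> real" and \<Omega> :: "(real^'n) set"
  assumes s: "0 < s" and lam: "0 < lam" and \<kappa>: "0 < \<kappa>"
    and K_meas: "K \<in> borel_measurable lborel"
    and K_bounds: "\<And>y. lam * norm y powr (- real CARD('n) - 2 * s) \<le> K y \<and>
                        K y \<le> Lam * norm y powr (- real CARD('n) - 2 * s)"
    and \<Omega>: "open \<Omega>" "prop_P R \<kappa> \<Omega>" and x: "x \<in> \<Omega>" and dR: "2 * dOmega \<Omega> x < R"
  shows "lam * 3 powr (- real CARD('n) - 2 * s) * unit_ball_vol CARD('n) * (2 * \<kappa>) ^ CARD('n)
           * dOmega \<Omega> x powr (- 2 * s) \<le> pv_op K (indicator \<Omega>) x"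
proof (cases "\<Omega> = UNIV")
  case True
  have "0 \<le> K y" for y using K_bounds[of y] lam
    by (meson order_trans mult_nonneg_nonneg powr_ge_zero less_imp_le)
  moreover have "dOmega \<Omega> x = 0" using True unfolding dOmega_def by (simp add: infdist_def)
  ultimately show ?thesis using pv_op_indicator_nonneg[OF \<Omega>(1) x] by simp
next
  case False
  define n where "n = CARD('n)"
  define d where "d = dOmega \<Omega> x"
  have d: "d > 0" using dOmega_pos[OF \<Omega>(1) False x] unfolding d_def .
  obtain c where c: "ball c (\<kappa> * (2 * d)) \<subseteq> - \<Omega> \<inter> ball x (3 * d)"
    using prop_P_exterior_ball_nearby[OF \<Omega>(2,1) False x dR] unfolding d_def by blast
  have "lam * 3 powr (- real n - 2 * s) * unit_ball_vol n * (2 * \<kappa>) ^ n * d powr (- 2 * s)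
      = lam * (3 * d) powr (- (n + 2 * s)) * measure lborel (ball c (\<kappa> * (2 * d)))"
  proof -
    have "(3 * d) powr (- (n + 2 * s)) = 3 powr (- n - 2 * s) * d powr (- (n + 2 * s))"
      using d by (simp add: powr_mult)
    moreover have "d powr (- 2 * s) = d powr (- (n + 2 * s)) * d powr n"
      by (simp add: powr_add[symmetric])
    moreover have "(\<kappa> * (2 * d)) ^ n = (2 * \<kappa>) ^ n * d powr n"
      using d by (simp add: powr_realpow power_mult_distrib)
    ultimately show ?thesis
      using content_ball[of "\<kappa> * (2 * d)" c] \<kappa> d unfolding n_def by simp
  qed
  also have "\<dots> \<le> pv_op K (indicator \<Omega>) x"
    using K_bounds lam s \<Omega>(1) x c unfolding n_def
    by (intro pv_op_indicator_ge_exterior_ball[OF _ _ K_meas]) (auto simp: algebra_simps)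
  finally show ?thesis unfolding d_def n_def .
qed

theorem lemma3p2:
  fixes s :: real
  assumes n2: "CARD('n) \<ge> 2"
    and s01: "0 < s" "s < 1"
  shows "\<exists>(c0 :: real \<Rightarrow> real \<Rightarrow> real) (d0 :: real \<Rightarrow> (real^'n) set \<Rightarrow> real).
     (\<forall>lam \<kappa>. 0 < lam \<and> 0 < \<kappa> \<longrightarrow> c0 lam \<kappa> > 0) \<and>
     (\<forall>R \<Omega>. d0 R \<Omega> > 0) \<and>
     (\<forall>(K :: real^'n \<Rightarrow> real) lam Lam R \<kappa> (\<Omega> :: (real^'n) set).
        0 < lam \<and> lam \<le> Lam \<and>
        K \<in> borel_measurable lborel \<and>
        (\<forall>y. K y = K (- y)) \<and>
        (\<forall>y. lam * norm y powr (- real CARD('n) - 2 * s) \<le> K y \<and>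
             K y \<le> Lam * norm y powr (- real CARD('n) - 2 * s)) \<and>
        0 < R \<and> 0 < \<kappa> \<and> \<kappa> < R \<and> open \<Omega> \<and> prop_P R \<kappa> \<Omega>
        \<longrightarrow> (\<forall>x\<in>\<Omega>. dOmega \<Omega> x < d0 R \<Omega> \<longrightarrow>
               pv_op K (indicator \<Omega>) x \<ge> c0 lam \<kappa> * dOmega \<Omega> x powr (- 2 * s)))"
proof -
  define c0 where "c0 lam \<kappa> = lam * 3 powr (- real CARD('n) - 2 * s) * unit_ball_vol CARD('n)
    * (2 * \<kappa>) ^ CARD('n)" for lam \<kappa> :: real
  define d0 where "d0 R (\<Omega> :: (real^'n) set) = (if 0 < R then R / 2 else 1)" for R :: real and \<Omega>
  show ?thesis
  proof (intro exI[of _ c0] exI[of _ d0] conjI allI impI ballI)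
    fix lam \<kappa> :: real
    assume "0 < lam \<and> 0 < \<kappa>"
    then show "c0 lam \<kappa> > 0" unfolding c0_def by simp
  next
    fix R :: real and \<Omega> :: "(real^'n) set"
    show "d0 R \<Omega> > 0" unfolding d0_def by simp
  next
    fix K :: "real^'n \<Rightarrow> real" and lam Lam R \<kappa> :: real and \<Omega> :: "(real^'n) set" and x
    assume H: "0 < lam \<and> lam \<le> Lam \<and> K \<in> borel_measurable lborel \<and> (\<forall>y. K y = K (- y)) \<and>
        (\<forall>y. lam * norm y powr (- real CARD('n) - 2 * s) \<le> K y \<and>
             K y \<le> Lam * norm y powr (- real CARD('n) - 2 * s)) \<and>
        0 < R \<and> 0 < \<kappa> \<and> \<kappa> < R \<and> open \<Omega> \<and> prop_P R \<kappa> \<Omega>"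
      and x: "x \<in> \<Omega>" and near: "dOmega \<Omega> x < d0 R \<Omega>"
    have "2 * dOmega \<Omega> x < R" using near H unfolding d0_def by auto
    then show "pv_op K (indicator \<Omega>) x \<ge> c0 lam \<kappa> * dOmega \<Omega> x powr (- 2 * s)"
      unfolding c0_def using pv_op_indicator_lower_bound[of s lam \<kappa> K Lam \<Omega> R x] H x s01 by blast
  qed
qed

end
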